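(* Fix a positive integer $k$ and a permutation $\rho$. Then $\lim_{n\to\infty}\left(\operatorname{op}^*_{n,k}(\rho)\right)^{1/n}$ exists and is a real number in $[1,\infty)$.
   Context: For a permutation $\rho=\rho_1\cdots\rho_m\in\mathcal{S}_m$ and a sequence of pairwise disjoint (possibly empty) sets $B_1/B_2/\cdots/B_k$, we say it contains $\rho$ if there are indices $i_1<i_2<\cdots<i_m$ and elements $b_j\in B_{i_j}$ such that $b_1\cdots b_m$ is order-isomorphic to $\rho$ (i.e. $b_a<b_c$ iff $\rho_a<\rho_c$); otherwise it avoids $\rho$. $\operatorname{op}^*_{n,k}(\rho)$ is the number of sequences $B_1/\cdots/B_k$ of pairwise disjoint subsets of $[n]$ (blocks are allowed to be empty; order of blocks matters, order within a block does not) with $\bigcup_i B_i=[n]$ that avoid $\rho$. *)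

theory Defs
  imports Complex_Main
begin

(* A permutation rho in S_m, written in one-line notation rho_1 ... rho_m,
   represented as a list of length m that is a rearrangement of 1..m. *)
definition is_perm :: "nat list \<Rightarrow> bool" where
  "is_perm \<rho> \<longleftrightarrow> distinct \<rho> \<and> set \<rho> = {1..length \<rho>}"

(* A sequence of blocks B_1/.../B_k, as a list of sets (index i = block i+1),
   contains rho *)
definition seq_contains :: "nat set list \<Rightarrow> nat list \<Rightarrow> bool" where
  "seq_contains Bs \<rho> \<longleftrightarrow>
     (\<exists>idx :: nat \<Rightarrow> nat. \<exists>b :: nat \<Rightarrow> nat.
        (\<forall>j < length \<rho>. idx j < length Bs \<and> b j \<in> Bs ! (idx j)) \<and>
        (\<forall>j. Suc j < length \<rho> \<longrightarrow> idx j < idx (Suc j)) \<and>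
        (\<forall>a < length \<rho>. \<forall>c < length \<rho>. b a < b c \<longleftrightarrow> \<rho> ! a < \<rho> ! c))"

definition seq_avoids :: "nat set list \<Rightarrow> nat list \<Rightarrow> bool" where
  "seq_avoids Bs \<rho> \<longleftrightarrow> \<not> seq_contains Bs \<rho>"

definition op_star :: "nat \<Rightarrow> nat \<Rightarrow> nat list \<Rightarrow> nat" where
  "op_star n k \<rho> = card {Bs :: nat set list.
      length Bs = k \<and>
      (\<forall>i < k. \<forall>j < k. i \<noteq> j \<longrightarrow> Bs ! i \<inter> Bs ! j = {}) \<and>
      \<Union> (set Bs) = {1..n} \<and>
      seq_avoids Bs \<rho>}"

end

theory Submission
  imports Defs
begin

text \<open>Cutting the ground set \<open>[a + b]\<close> into \<open>[a]\<close> and the shifted copy of \<open>[b]\<close> sends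
  a \<open>\<rho>\<close>-avoiding block sequence to a pair of \<open>\<rho>\<close>-avoiding block sequences, since an
  occurrence of \<open>\<rho>\<close> in either part is an occurrence in the whole; this map is injective,
  so \<open>op\<^sup>*(a + b) \<le> op\<^sup>*(a) \<cdot> op\<^sup>*(b)\<close>. Putting everything into the first block
  avoids any pattern of length at least two, so \<open>op\<^sup>*(n) \<ge> 1\<close>, and Fekete's lemma gives
  convergence of the \<open>n\<close>-th roots to their infimum, which is at least 1.\<close>

lemma submultiplicative_power_bound:
  fixes f :: "nat \<Rightarrow> real"
  assumes nonneg: "\<And>n. 0 \<le> f n" and submult: "\<And>a b. f (a + b) \<le> f a * f b"
  shows "f (s * q + r) \<le> f q ^ s * f r"
proof (induction s)
  case (Suc s)
  have "f (Suc s * q + r) = f (q + (s * q + r))" by (simp add: add.assoc)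
  also have "\<dots> \<le> f q * f (s * q + r)" by (rule submult)
  also have "\<dots> \<le> f q * (f q ^ s * f r)" using Suc.IH nonneg by (rule mult_left_mono)
  finally show ?case by (simp add: mult.assoc)
qed simp

lemma submultiplicative_root_bound:
  fixes f :: "nat \<Rightarrow> real"
  assumes ge1: "\<And>n. 1 \<le> f n" and submult: "\<And>a b. f (a + b) \<le> f a * f b"
    and "n \<ge> 1" "q \<ge> 1"
  shows "root n (f n) \<le> root q (f q) * root n (Max (f ` {..<q}))"
proof -
  define c where "c = root q (f q)"
  define M where "M = Max (f ` {..<q})"
  have c: "1 \<le> c" unfolding c_def using ge1 \<open>q \<ge> 1\<close> by simp
  have fq: "f q = c ^ q" unfolding c_def using ge1[of q] \<open>q \<ge> 1\<close> by (simp add: real_root_pow_pos2)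
  have "f n \<le> f q ^ (n div q) * f (n mod q)"
    using submultiplicative_power_bound[of f "n div q" q "n mod q"] ge1 submult
    by (simp add: order_trans[OF zero_le_one])
  also have "\<dots> \<le> c ^ n * M"
  proof (rule mult_mono)
    have "q * (n div q) \<le> n" by (metis mult.commute div_mult_mod_eq le_add1)
    then have "c ^ (q * (n div q)) \<le> c ^ n" using c by (intro power_increasing)
    then show "f q ^ (n div q) \<le> c ^ n" unfolding fq by (simp add: power_mult)
    show "f (n mod q) \<le> M" unfolding M_def using \<open>q \<ge> 1\<close> by (intro Max_ge) auto
  qed (use c ge1[of "n mod q"] in auto)
  finally have "root n (f n) \<le> root n (c ^ n * M)" using \<open>n \<ge> 1\<close> by (intro real_root_le_mono) auto
  also have "\<dots> = c * root n M" using \<open>n \<ge> 1\<close> c by (simp add: real_root_mult real_root_pos2)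
  finally show ?thesis unfolding c_def M_def .
qed

lemma submultiplicative_root_tendsto_Inf:
  fixes f :: "nat \<Rightarrow> real"
  assumes ge1: "\<And>n. 1 \<le> f n" and submult: "\<And>a b. f (a + b) \<le> f a * f b"
  shows "(\<lambda>n. root n (f n)) \<longlonglongrightarrow> (INF n\<in>{1..}. root n (f n))"
proof (rule LIMSEQ_I)
  define L where "L = (INF n\<in>{1..}. root n (f n))"
  have bdd: "bdd_below ((\<lambda>n. root n (f n)) ` {1..})"
    using ge1 by (intro bdd_belowI2[of _ 1]) auto
  fix r :: real assume "0 < r"
  have "L < L + r / 2" using \<open>0 < r\<close> by simp
  then obtain q where q: "q \<ge> 1" and root_q: "root q (f q) < L + r / 2"
    using cINF_less_iff[OF _ bdd] unfolding L_def by (metis atLeast_iff empty_iff order_refl)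
  define c where "c = root q (f q)"
  define M where "M = Max (f ` {..<q})"
  have c: "1 \<le> c" unfolding c_def using ge1 q by simp
  have "1 \<le> M" unfolding M_def using ge1[of 0] q by (intro order_trans[OF _ Max_ge]) auto
  then have "(\<lambda>n. root n M) \<longlonglongrightarrow> 1" by (intro LIMSEQ_root_const) auto
  moreover have "0 < r / (2 * c)" using \<open>0 < r\<close> c by simp
  ultimately obtain N where N: "\<And>n. n \<ge> N \<Longrightarrow> norm (root n M - 1) < r / (2 * c)"
    by (metis LIMSEQ_D)
  show "\<exists>N. \<forall>n\<ge>N. norm (root n (f n) - L) < r"
  proof (intro exI allI impI)
    fix n assume n: "max N 1 \<le> n"
    have "c * (root n M - 1) < c * (r / (2 * c))"
      using N[of n] n c by (intro mult_strict_left_mono) auto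
    then have "c * root n M < c + r / 2" using c by (simp add: algebra_simps)
    moreover have "root n (f n) \<le> c * root n M"
      using submultiplicative_root_bound[OF ge1 submult, of n q] n q unfolding c_def M_def by simp
    moreover have "L \<le> root n (f n)" unfolding L_def using n by (intro cINF_lower[OF bdd]) auto
    ultimately show "norm (root n (f n) - L) < r" using root_q unfolding c_def by auto
  qed
qed

definition avoiding_block_seqs :: "nat \<Rightarrow> nat \<Rightarrow> nat list \<Rightarrow> nat set list set" where
  "avoiding_block_seqs n k \<rho> = {Bs. length Bs = k \<and>
      (\<forall>i < k. \<forall>j < k. i \<noteq> j \<longrightarrow> Bs ! i \<inter> Bs ! j = {}) \<and>
      \<Union> (set Bs) = {1..n} \<and> seq_avoids Bs \<rho>}"

lemma op_star_eq_card: "op_star n k \<rho> = card (avoiding_block_seqs n k \<rho>)"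
  unfolding op_star_def avoiding_block_seqs_def ..

lemma finite_avoiding_block_seqs: "finite (avoiding_block_seqs n k \<rho>)"
proof (rule finite_subset)
  show "avoiding_block_seqs n k \<rho> \<subseteq> {Bs. set Bs \<subseteq> Pow {1..n} \<and> length Bs = k}"
    unfolding avoiding_block_seqs_def by auto
qed (intro finite_lists_length_eq, simp)

lemma seq_contains_mono:
  assumes "seq_contains Cs \<rho>" and "strict_mono h" and "length Cs \<le> length Bs"
    and "\<And>i. i < length Cs \<Longrightarrow> h ` (Cs ! i) \<subseteq> Bs ! i"
  shows "seq_contains Bs \<rho>"
proof -
  obtain idx b where
    mem: "\<forall>j < length \<rho>. idx j < length Cs \<and> b j \<in> Cs ! idx j" and
    incr: "\<forall>j. Suc j < length \<rho> \<longrightarrow> idx j < idx (Suc j)" and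
    iso: "\<forall>a < length \<rho>. \<forall>c < length \<rho>. b a < b c \<longleftrightarrow> \<rho> ! a < \<rho> ! c"
    using assms(1) unfolding seq_contains_def by blast
  have "idx j < length Bs \<and> h (b j) \<in> Bs ! idx j" if "j < length \<rho>" for j
    using mem assms(3,4) that by (meson image_subset_iff less_le_trans)
  moreover have "h (b a) < h (b c) \<longleftrightarrow> \<rho> ! a < \<rho> ! c"
    if "a < length \<rho>" "c < length \<rho>" for a c
    using iso that strict_mono_less[OF assms(2)] by simp
  ultimately show ?thesis
    unfolding seq_contains_def using incr by (intro exI[of _ idx] exI[of _ "h \<circ> b"]) simp
qed

lemma seq_avoids_if_one_block:
  assumes "length \<rho> \<ge> 2" and "\<And>i. i < length Bs \<Longrightarrow> i \<noteq> i0 \<Longrightarrow> Bs ! i = {}"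
  shows "seq_avoids Bs \<rho>"
  unfolding seq_avoids_def seq_contains_def
proof clarify
  fix idx b
  assume mem: "\<forall>j < length \<rho>. idx j < length Bs \<and> b j \<in> Bs ! idx j"
    and incr: "\<forall>j. Suc j < length \<rho> \<longrightarrow> idx j < idx (Suc j)"
  have same: "idx j = i0" if "j < length \<rho>" for j
  proof (rule ccontr)
    assume "idx j \<noteq> i0"
    then have "Bs ! idx j = {}" using mem that assms(2) by simp
    then show False using mem that by (metis empty_iff)
  qed
  have "idx 0 = idx (Suc 0)" using same[of 0] same[of "Suc 0"] assms(1) by force
  moreover have "idx 0 < idx (Suc 0)" using incr assms(1) by simp
  ultimately show False by simp
qed

lemma avoiding_block_seqs_nonempty:
  assumes "k \<ge> 1" and "length \<rho> \<ge> 2"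
  shows "{1..n} # replicate (k - 1) {} \<in> avoiding_block_seqs n k \<rho>"
proof -
  let ?Bs = "{1..n} # replicate (k - 1) {} :: nat set list"
  have empty: "?Bs ! i = {}" if "i \<noteq> 0" "i < k" for i
    using that by (cases i) auto
  have "seq_avoids ?Bs \<rho>" using assms(2) empty by (intro seq_avoids_if_one_block) auto
  moreover have "?Bs ! i \<inter> ?Bs ! j = {}" if "i < k" "j < k" "i \<noteq> j" for i j
    using empty that by (cases "i = 0") auto
  ultimately show ?thesis unfolding avoiding_block_seqs_def using assms(1) by auto
qed

lemma avoiding_block_seqs_restrict_initial:
  assumes "Bs \<in> avoiding_block_seqs (a + b) k \<rho>"
  shows "map (\<lambda>B. B \<inter> {1..a}) Bs \<in> avoiding_block_seqs a k \<rho>"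
proof -
  have "\<not> seq_contains (map (\<lambda>B. B \<inter> {1..a}) Bs) \<rho>"
    using assms seq_contains_mono[of "map (\<lambda>B. B \<inter> {1..a}) Bs" \<rho> id Bs]
    unfolding avoiding_block_seqs_def seq_avoids_def by (auto simp: strict_mono_def)
  moreover have "\<Union> (set Bs) \<inter> {1..a} = {1..a}"
    using assms unfolding avoiding_block_seqs_def by auto
  ultimately show ?thesis
    using assms unfolding avoiding_block_seqs_def seq_avoids_def by auto
qed

lemma avoiding_block_seqs_restrict_shifted:
  assumes "Bs \<in> avoiding_block_seqs (a + b) k \<rho>"
  shows "map (\<lambda>B. (\<lambda>x. x + a) -` B \<inter> {1..b}) Bs \<in> avoiding_block_seqs b k \<rho>"
proof -
  let ?Cs = "map (\<lambda>B. (\<lambda>x. x + a) -` B \<inter> {1..b}) Bs"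
  have "\<not> seq_contains ?Cs \<rho>"
    using assms seq_contains_mono[of ?Cs \<rho> "\<lambda>x. x + a" Bs]
    unfolding avoiding_block_seqs_def seq_avoids_def by (auto simp: strict_mono_def)
  moreover have "\<Union> (set ?Cs) = {1..b}"
  proof -
    have "\<Union> (set ?Cs) = (\<lambda>x. x + a) -` \<Union> (set Bs) \<inter> {1..b}" by auto
    also have "\<dots> = {1..b}" using assms unfolding avoiding_block_seqs_def by auto
    finally show ?thesis .
  qed
  ultimately show ?thesis
    using assms unfolding avoiding_block_seqs_def seq_avoids_def by auto
qed

lemma inj_on_split_initial_shifted:
  fixes a b :: nat
  shows "inj_on (\<lambda>B. (B \<inter> {1..a}, (\<lambda>x. x + a) -` B \<inter> {1..b})) (Pow {1..a + b})"
proof (rule inj_onI)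
  have decomp: "B = B \<inter> {1..a} \<union> (\<lambda>x. x + a) ` ((\<lambda>x. x + a) -` B \<inter> {1..b})"
    if "B \<subseteq> {1..a + b}" for B :: "nat set"
  proof (intro equalityI subsetI)
    fix x assume "x \<in> B"
    moreover have "x \<in> {1..a + b}" using \<open>x \<in> B\<close> that by blast
    ultimately show "x \<in> B \<inter> {1..a} \<union> (\<lambda>x. x + a) ` ((\<lambda>x. x + a) -` B \<inter> {1..b})"
      by (cases "x \<le> a") (auto intro!: image_eqI[of x _ "x - a"])
  qed auto
  fix B C assume "B \<in> Pow {1..a + b}" "C \<in> Pow {1..a + b}"
    and "(B \<inter> {1..a}, (\<lambda>x. x + a) -` B \<inter> {1..b}) = (C \<inter> {1..a}, (\<lambda>x. x + a) -` C \<inter> {1..b})"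
  then show "B = C" using decomp[of B] decomp[of C] by simp
qed

lemma card_avoiding_block_seqs_add_le:
  "card (avoiding_block_seqs (a + b) k \<rho>)
    \<le> card (avoiding_block_seqs a k \<rho>) * card (avoiding_block_seqs b k \<rho>)"
proof -
  define split where
    "split Bs = (map (\<lambda>B. B \<inter> {1..a}) Bs, map (\<lambda>B. (\<lambda>x. x + a) -` B \<inter> {1..b}) Bs)" for Bs
  have "inj_on split (avoiding_block_seqs (a + b) k \<rho>)"
  proof (rule inj_onI)
    fix Bs Cs assume Bs: "Bs \<in> avoiding_block_seqs (a + b) k \<rho>"
      and Cs: "Cs \<in> avoiding_block_seqs (a + b) k \<rho>" and "split Bs = split Cs"
    have pairs: "map (\<lambda>B. (f B, g B)) xs = zip (map f xs) (map g xs)" for f g and xs :: "'a list"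
      by (induction xs) auto
    have eq: "map (\<lambda>B. (B \<inter> {1..a}, (\<lambda>x. x + a) -` B \<inter> {1..b})) Bs
        = map (\<lambda>B. (B \<inter> {1..a}, (\<lambda>x. x + a) -` B \<inter> {1..b})) Cs"
      using \<open>split Bs = split Cs\<close> unfolding split_def pairs by simp
    have "set Bs \<union> set Cs \<subseteq> Pow {1..a + b}"
      using Bs Cs unfolding avoiding_block_seqs_def by auto
    then have "inj_on (\<lambda>B. (B \<inter> {1..a}, (\<lambda>x. x + a) -` B \<inter> {1..b})) (set Bs \<union> set Cs)"
      by (rule inj_on_subset[OF inj_on_split_initial_shifted])
    then show "Bs = Cs" using eq by (simp add: inj_on_map_eq_map)
  qed
  moreover have "split ` avoiding_block_seqs (a + b) k \<rho>
      \<subseteq> avoiding_block_seqs a k \<rho> \<times> avoiding_block_seqs b k \<rho>"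
    unfolding split_def
    using avoiding_block_seqs_restrict_initial avoiding_block_seqs_restrict_shifted by blast
  ultimately have "card (avoiding_block_seqs (a + b) k \<rho>)
      \<le> card (avoiding_block_seqs a k \<rho> \<times> avoiding_block_seqs b k \<rho>)"
    by (intro card_inj_on_le finite_cartesian_product finite_avoiding_block_seqs)
  then show ?thesis by (simp add: card_cartesian_product)
qed

theorem theorem10:
  fixes k :: nat and \<rho> :: "nat list"
  assumes "k \<ge> 1" and "is_perm \<rho>" and "length \<rho> \<ge> 2"
  shows "\<exists>L :: real. (\<lambda>n. root n (real (op_star n k \<rho>))) \<longlonglongrightarrow> L \<and> 1 \<le> L"
proof -
  define f where "f n = real (op_star n k \<rho>)" for n
  have ge1: "1 \<le> f n" for n
  proof -
    have "card (avoiding_block_seqs n k \<rho>) \<noteq> 0"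
      using avoiding_block_seqs_nonempty[OF assms(1,3), of n] finite_avoiding_block_seqs
      by (auto simp: card_eq_0_iff)
    then show ?thesis unfolding f_def op_star_eq_card by simp
  qed
  have submult: "f (a + b) \<le> f a * f b" for a b
    unfolding f_def op_star_eq_card of_nat_mult[symmetric] of_nat_le_iff
    by (rule card_avoiding_block_seqs_add_le)
  have "(\<lambda>n. root n (f n)) \<longlonglongrightarrow> (INF n\<in>{1..}. root n (f n))"
    by (rule submultiplicative_root_tendsto_Inf[OF ge1 submult])
  moreover have "1 \<le> (INF n\<in>{1..}. root n (f n))"
    using ge1 by (intro cINF_greatest) auto
  ultimately show ?thesis unfolding f_def by blast
qed

end
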